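(* Let $R>0$, $n\in\mathbb N$, $Q,K,V\in\mathbb R^{k\times d}$, $A:=K^\top Q/\sqrt k$, let $f$ be self-attention with parameters $(A,V)$ and $F$ mean-field self-attention with parameters $(A,V)$. Then $$\mathrm{Lip}^{\|\cdot\|_F}\big(f_{|B_R^n}\big)\le\mathrm{Lip}^{W_2}\big(F_{|\mathcal P(B_R)}\big).$$
   Context: For $X=(x_1,\dots,x_n)\in(\mathbb R^d)^n$, $f(X)=\big(V\sum_{j=1}^nP_{ij}x_j\big)_{1\le i\le n}$ with $P_{ij}=\exp(x_i^\top A^\top x_j)/\sum_{l=1}^n\exp(x_i^\top A^\top x_l)$; $\mathrm{Lip}^{\|\cdot\|_F}(f_{|\mathcal X})=\sup_{X\ne Y\in\mathcal X}\|f(X)-f(Y)\|_F/\|X-Y\|_F$ with $\|X\|_F=(\sum_i|x_i|^2)^{1/2}$. $B_R\subset\mathbb R^d$ is the closed ball of center 0 and radius $R$ and $\mathcal P(B_R)$ the set of probability measures supported in $B_R$. Mean-field self-attention: $F(\mu):=(\Gamma_\mu)_\sharp\mu$ with $\Gamma_\mu(x)=\int\exp(x^\top A^\top y)Vy\,d\mu(y)/\int\exp(x^\top A^\top y)d\mu(y)$ and $\sharp$ the pushforward. $W_2$ is the 2-Wasserstein distance and $\mathrm{Lip}^{W_2}(F_{|\mathcal X})=\sup_{\mu\ne\nu\in\mathcal X}W_2(F(\mu),F(\nu))/W_2(\mu,\nu)$. *)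

theory Defs
  imports "HOL-Probability.Probability"
begin

text \<open>Tokens are vectors in R^d (type real^'d); a configuration of n tokens is a
 function from a finite index type 'n to real^'d (n = CARD('n)).\<close>

definition attn_matrix :: "real^'d^'k \<Rightarrow> real^'d^'k \<Rightarrow> real^'d^'d" where
  "attn_matrix Q K = (1 / sqrt (real CARD('k))) *\<^sub>R (transpose K ** Q)"

text \<open>Discrete self-attention: x_i^T A^T x_j = (A x_i) . x_j.\<close>
definition attn_P :: "real^'d^'d \<Rightarrow> ('n::finite \<Rightarrow> real^'d) \<Rightarrow> 'n \<Rightarrow> 'n \<Rightarrow> real" where
  "attn_P A X i j = exp ((A *v X i) \<bullet> X j) / (\<Sum>l\<in>UNIV. exp ((A *v X i) \<bullet> X l))"

definition self_attn :: "real^'d^'d \<Rightarrow> real^'d^'k \<Rightarrow> ('n::finite \<Rightarrow> real^'d) \<Rightarrow> ('n \<Rightarrow> real^'k)" where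
  "self_attn A V X = (\<lambda>i. V *v (\<Sum>j\<in>UNIV. attn_P A X i j *\<^sub>R X j))"

definition frob_norm :: "('n::finite \<Rightarrow> real^'k) \<Rightarrow> real" where
  "frob_norm X = sqrt (\<Sum>i\<in>UNIV. (norm (X i))\<^sup>2)"

definition Gamma :: "real^'d^'d \<Rightarrow> real^'d^'k \<Rightarrow> (real^'d) measure \<Rightarrow> real^'d \<Rightarrow> real^'k" where
  "Gamma A V \<mu> x = (1 / (\<integral>y. exp ((A *v x) \<bullet> y) \<partial>\<mu>)) *\<^sub>R
      (\<integral>y. exp ((A *v x) \<bullet> y) *\<^sub>R (V *v y) \<partial>\<mu>)"

definition mf_attn :: "real^'d^'d \<Rightarrow> real^'d^'k \<Rightarrow> (real^'d) measure \<Rightarrow> (real^'k) measure" where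
  "mf_attn A V \<mu> = distr \<mu> borel (Gamma A V \<mu>)"

definition prob_ball :: "real \<Rightarrow> ('a::euclidean_space) measure set" where
  "prob_ball R = {\<mu>. prob_space \<mu> \<and> sets \<mu> = sets borel \<and> emeasure \<mu> (cball 0 R) = 1}"

definition couplings :: "('a::euclidean_space) measure \<Rightarrow> 'a measure \<Rightarrow> ('a \<times> 'a) measure set" where
  "couplings \<mu> \<nu> = {\<pi>. prob_space \<pi> \<and> sets \<pi> = sets (borel \<Otimes>\<^sub>M borel) \<and>
      distr \<pi> borel fst = \<mu> \<and> distr \<pi> borel snd = \<nu>}"

definition W2 :: "('a::euclidean_space) measure \<Rightarrow> 'a measure \<Rightarrow> real" where
  "W2 \<mu> \<nu> = sqrt (enn2real (INF \<pi>\<in>couplings \<mu> \<nu>.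
      \<integral>\<^sup>+ z. ennreal ((dist (fst z) (snd z))\<^sup>2) \<partial>\<pi>))"

definition lip_const :: "('a \<Rightarrow> 'b) \<Rightarrow> ('a \<Rightarrow> 'a \<Rightarrow> real) \<Rightarrow> ('b \<Rightarrow> 'b \<Rightarrow> real) \<Rightarrow> 'a set \<Rightarrow> ereal" where
  "lip_const f d1 d2 S = (SUP p\<in>{(x, y). x \<in> S \<and> y \<in> S \<and> x \<noteq> y}.
      ereal (d2 (f (fst p)) (f (snd p)) / d1 (fst p) (snd p)))"

end

theory Submission
  imports Defs "HOL-Complex_Analysis.Conformal_Mappings"
begin

(*
  Mean-field attention maps the empirical measure of a configuration X to the empirical
  measure of f(X).  If every token X i has Y i as a nearest point among the tokens of Y,
  the diagonal coupling is optimal and W2 between the empirical measures is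
  |X - Y|_F / sqrt n; when this holds both for (X, Y) and for (f X, f Y), the Frobenius
  quotient of f at (X, Y) is a W2 quotient of F.

  For arbitrary X, Y in B_R^n follow the segment X + t (Y - X).  Whether two tokens, or two
  outputs, coincide is a zero of a real-analytic function of t, so such collisions happen
  either for all t or for finitely many t.  Away from these finitely many times, nearby
  points of the segment are nearest matched before and after attention, so
  t \<mapsto> f (X + t (Y - X)) is locally Lipschitz with constant Lip(F) |Y - X|_F,
  hence Lipschitz on [0, 1].
*)

section \<open>Empirical measures\<close>

definition empirical :: "('n::finite \<Rightarrow> 'a::euclidean_space) \<Rightarrow> 'a measure" where
  "empirical Z = distr (uniform_count_measure UNIV) borel Z"

lemma measurable_uniform_count_measure_UNIV:
  assumes "space M = UNIV"
  shows "g \<in> measurable (uniform_count_measure (UNIV::'n::finite set)) M"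
  using assms by (simp add: measurable_cong_sets[OF sets_uniform_count_measure_count_space refl])

lemmas [measurable] = measurable_uniform_count_measure_UNIV[of borel]
  measurable_uniform_count_measure_UNIV[of "borel \<Otimes>\<^sub>M borel"]

lemma prob_space_uniform_count_measure_UNIV:
  "prob_space (uniform_count_measure (UNIV::'n::finite set))"
  by (rule prob_space_uniform_count_measure) auto

lemma nn_integral_uniform_count_measure_UNIV:
  assumes "\<And>i. g i \<ge> 0"
  shows "(\<integral>\<^sup>+ i. ennreal (g i) \<partial>uniform_count_measure (UNIV::'n::finite set))
           = ennreal ((\<Sum>i\<in>UNIV. g i) / real CARD('n))"
proof -
  have "(\<integral>\<^sup>+ i. ennreal (g i) \<partial>uniform_count_measure (UNIV::'n set))
      = (\<Sum>i\<in>UNIV. ennreal (g i / real CARD('n)))"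
    unfolding uniform_count_measure_def
    by (simp add: nn_integral_point_measure_finite ennreal_mult'[symmetric] assms)
  also have "\<dots> = ennreal ((\<Sum>i\<in>UNIV. g i) / real CARD('n))"
    by (simp add: assms sum_divide_distrib)
  finally show ?thesis .
qed

lemma prob_space_empirical: "prob_space (empirical Z)"
  unfolding empirical_def
  by (rule prob_space.prob_space_distr[OF prob_space_uniform_count_measure_UNIV]) simp

lemma sets_empirical [simp, measurable_cong]: "sets (empirical Z) = sets borel"
  unfolding empirical_def by simp

lemma empirical_in_prob_ball:
  fixes Z :: "'n::finite \<Rightarrow> 'a::euclidean_space"
  assumes "\<And>i. Z i \<in> cball 0 R"
  shows "empirical Z \<in> prob_ball R"
proof -
  have "emeasure (empirical Z) (cball 0 R)
      = emeasure (uniform_count_measure (UNIV::'n set)) (space (uniform_count_measure UNIV))"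
    unfolding empirical_def using assms
    by (subst emeasure_distr) (auto simp: space_uniform_count_measure vimage_def)
  also have "\<dots> = 1"
    by (rule prob_space.emeasure_space_1[OF prob_space_uniform_count_measure_UNIV])
  finally show ?thesis
    unfolding prob_ball_def using prob_space_empirical by simp
qed

lemma nn_integral_empirical:
  fixes Z :: "'n::finite \<Rightarrow> 'a::euclidean_space"
  assumes "g \<in> borel_measurable borel" "\<And>x. g x \<ge> 0"
  shows "(\<integral>\<^sup>+ x. ennreal (g x) \<partial>empirical Z) = ennreal ((\<Sum>i\<in>UNIV. g (Z i)) / real CARD('n))"
  unfolding empirical_def using assms
  by (simp add: nn_integral_distr nn_integral_uniform_count_measure_UNIV)

lemma integral_empirical:
  fixes g :: "'a::euclidean_space \<Rightarrow> 'b::{banach, second_countable_topology}"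
    and Z :: "'n::finite \<Rightarrow> 'a"
  assumes "g \<in> borel_measurable borel"
  shows "(\<integral>x. g x \<partial>empirical Z) = (1 / real CARD('n)) *\<^sub>R (\<Sum>i\<in>UNIV. g (Z i))"
  unfolding empirical_def uniform_count_measure_def
  using assms lebesgue_integral_point_measure_finite[of "UNIV::'n set" "\<lambda>_. 1 / real CARD('n)" "\<lambda>i. g (Z i)"]
  by (simp add: integral_distr divide_ennreal ennreal_of_nat_eq_real_of_nat scaleR_sum_right)

lemma distr_empirical:
  fixes Z :: "'n::finite \<Rightarrow> 'a::euclidean_space" and g :: "'a \<Rightarrow> 'b::euclidean_space"
  assumes "g \<in> borel_measurable borel"
  shows "distr (empirical Z) borel g = empirical (\<lambda>i. g (Z i))"
  unfolding empirical_def using assms by (simp add: distr_distr comp_def)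

section \<open>Wasserstein distance between empirical measures\<close>

definition diagonal_coupling :: "('n::finite \<Rightarrow> 'a::euclidean_space) \<Rightarrow> ('n \<Rightarrow> 'a) \<Rightarrow> ('a \<times> 'a) measure" where
  "diagonal_coupling X Y = distr (uniform_count_measure UNIV) (borel \<Otimes>\<^sub>M borel) (\<lambda>i. (X i, Y i))"

lemma diagonal_coupling_in_couplings:
  "diagonal_coupling X Y \<in> couplings (empirical X) (empirical Y)"
  unfolding couplings_def diagonal_coupling_def empirical_def
  by (auto intro!: prob_space.prob_space_distr[OF prob_space_uniform_count_measure_UNIV]
      simp: distr_distr comp_def)

lemma transport_cost_diagonal_coupling:
  "(\<integral>\<^sup>+ z. ennreal ((dist (fst z) (snd z))\<^sup>2) \<partial>diagonal_coupling X Y)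
     = ennreal ((\<Sum>i\<in>UNIV. (dist (X i) (Y i))\<^sup>2) / real CARD('n))"
  for X Y :: "'n::finite \<Rightarrow> 'a::euclidean_space"
  unfolding diagonal_coupling_def
  by (simp add: nn_integral_distr nn_integral_uniform_count_measure_UNIV)

lemma optimal_cost_empirical_le:
  fixes X Y :: "'n::finite \<Rightarrow> 'a::euclidean_space"
  shows "(INF \<pi>\<in>couplings (empirical X) (empirical Y). \<integral>\<^sup>+ z. ennreal ((dist (fst z) (snd z))\<^sup>2) \<partial>\<pi>)
           \<le> ennreal ((\<Sum>i\<in>UNIV. (dist (X i) (Y i))\<^sup>2) / real CARD('n))"
  by (rule INF_lower2[OF diagonal_coupling_in_couplings]) (simp add: transport_cost_diagonal_coupling)

lemma W2_empirical_le:
  fixes X Y :: "'n::finite \<Rightarrow> 'a::euclidean_space"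
  shows "W2 (empirical X) (empirical Y) \<le> sqrt ((\<Sum>i\<in>UNIV. (dist (X i) (Y i))\<^sup>2) / real CARD('n))"
  unfolding W2_def using optimal_cost_empirical_le[of X Y]
  by (intro real_sqrt_le_mono) (simp add: enn2real_leI sum_nonneg)

lemma transport_cost_empirical_ge:
  fixes X Y :: "'n::finite \<Rightarrow> 'a::euclidean_space"
  assumes "\<pi> \<in> couplings (empirical X) (empirical Y)"
  shows "ennreal ((\<Sum>i\<in>UNIV. (infdist (X i) (range Y))\<^sup>2) / real CARD('n))
           \<le> (\<integral>\<^sup>+ z. ennreal ((dist (fst z) (snd z))\<^sup>2) \<partial>\<pi>)"
proof -
  have ps: "prob_space \<pi>" and sets: "sets \<pi> = sets (borel \<Otimes>\<^sub>M borel)"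
    and fst: "distr \<pi> borel fst = empirical X" and snd: "distr \<pi> borel snd = empirical Y"
    using assms unfolding couplings_def by auto
  have fst_meas: "fst \<in> measurable \<pi> borel" and snd_meas: "snd \<in> measurable \<pi> borel"
    by (simp_all add: measurable_cong_sets[OF sets refl])
  have "emeasure \<pi> (snd -` range Y \<inter> space \<pi>) = emeasure (empirical Y) (range Y)"
    by (subst snd[symmetric], subst emeasure_distr[OF snd_meas]) (simp_all add: finite_imp_closed)
  also have "\<dots> = emeasure (uniform_count_measure (UNIV::'n set)) (space (uniform_count_measure UNIV))"
    unfolding empirical_def
    by (subst emeasure_distr) (simp_all add: finite_imp_closed space_uniform_count_measure vimage_def)
  also have "\<dots> = 1"
    by (rule prob_space.emeasure_space_1[OF prob_space_uniform_count_measure_UNIV])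
  \<comment> \<open>The second marginal lives on the finite set \<open>range Y\<close>, so each transported pair costs
    at least the squared distance from its first coordinate to \<open>range Y\<close>.\<close>
  finally have ae: "AE z in \<pi>. snd z \<in> range Y"
    using prob_space.AE_prob_1[OF ps, of "snd -` range Y \<inter> space \<pi>"] by (simp add: measure_def)
  have meas: "(\<lambda>x. (infdist x (range Y))\<^sup>2) \<in> borel_measurable borel"
    by (intro borel_measurable_continuous_onI continuous_intros)
  have "ennreal ((\<Sum>i\<in>UNIV. (infdist (X i) (range Y))\<^sup>2) / real CARD('n))
      = (\<integral>\<^sup>+ x. ennreal ((infdist x (range Y))\<^sup>2) \<partial>empirical X)"
    by (rule nn_integral_empirical[OF meas, symmetric]) simp
  also have "\<dots> = (\<integral>\<^sup>+ z. ennreal ((infdist (fst z) (range Y))\<^sup>2) \<partial>\<pi>)"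
    using meas by (subst fst[symmetric], subst nn_integral_distr[OF fst_meas]) simp_all
  also have "\<dots> \<le> (\<integral>\<^sup>+ z. ennreal ((dist (fst z) (snd z))\<^sup>2) \<partial>\<pi>)"
    using ae by (intro nn_integral_mono_AE, eventually_elim)
       (auto intro!: ennreal_leI power_mono infdist_le infdist_nonneg)
  finally show ?thesis .
qed

lemma W2_empirical_ge:
  fixes X Y :: "'n::finite \<Rightarrow> 'a::euclidean_space"
  shows "sqrt ((\<Sum>i\<in>UNIV. (infdist (X i) (range Y))\<^sup>2) / real CARD('n)) \<le> W2 (empirical X) (empirical Y)"
proof -
  let ?I = "INF \<pi>\<in>couplings (empirical X) (empirical Y). \<integral>\<^sup>+ z. ennreal ((dist (fst z) (snd z))\<^sup>2) \<partial>\<pi>"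
  \<comment> \<open>Needed because \<open>W2\<close> takes \<open>enn2real\<close> of the infimum, which is 0 for an infinite cost.\<close>
  have "?I < top"
    using optimal_cost_empirical_le[of X Y] ennreal_less_top le_less_trans by blast
  moreover have "ennreal ((\<Sum>i\<in>UNIV. (infdist (X i) (range Y))\<^sup>2) / real CARD('n)) \<le> ?I"
    by (rule INF_greatest) (rule transport_cost_empirical_ge)
  ultimately have "enn2real (ennreal ((\<Sum>i\<in>UNIV. (infdist (X i) (range Y))\<^sup>2) / real CARD('n)))
      \<le> enn2real ?I"
    by (intro enn2real_mono)
  then have "(\<Sum>i\<in>UNIV. (infdist (X i) (range Y))\<^sup>2) / real CARD('n) \<le> enn2real ?I"
    by (simp add: sum_nonneg)
  then show ?thesis
    unfolding W2_def by (rule real_sqrt_le_mono)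
qed

definition nearest_matched :: "('n \<Rightarrow> 'a::metric_space) \<Rightarrow> ('n \<Rightarrow> 'a) \<Rightarrow> bool" where
  "nearest_matched X Y \<longleftrightarrow> (\<forall>i j. dist (X i) (Y i) \<le> dist (X i) (Y j))"

lemma infdist_range_nearest_matched:
  assumes "nearest_matched X Y"
  shows "infdist (X i) (range Y) = dist (X i) (Y i)"
proof (rule antisym)
  show "infdist (X i) (range Y) \<le> dist (X i) (Y i)"
    by (rule infdist_le) simp
  show "dist (X i) (Y i) \<le> infdist (X i) (range Y)"
    using assms unfolding nearest_matched_def infdist_def by (auto intro!: cINF_greatest)
qed

lemma W2_empirical_nearest_matched:
  fixes X Y :: "'n::finite \<Rightarrow> 'a::euclidean_space"
  assumes "nearest_matched X Y"
  shows "W2 (empirical X) (empirical Y) = sqrt ((\<Sum>i\<in>UNIV. (dist (X i) (Y i))\<^sup>2) / real CARD('n))"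
  using W2_empirical_le[of X Y] W2_empirical_ge[of X Y]
  by (simp add: infdist_range_nearest_matched[OF assms])

lemma frob_norm_eq_norm_vec: "frob_norm Z = norm (\<chi> i. Z i)"
  unfolding frob_norm_def norm_vec_def L2_set_def by simp

lemma frob_norm_nonneg: "frob_norm Z \<ge> 0"
  by (simp add: frob_norm_eq_norm_vec)

lemma frob_norm_scaleR: "frob_norm (\<lambda>i. c *\<^sub>R Z i) = \<bar>c\<bar> * frob_norm Z"
proof -
  have "(\<chi> i. c *\<^sub>R Z i) = c *\<^sub>R (\<chi> i. Z i)"
    by (simp add: vec_eq_iff)
  then show ?thesis
    by (simp add: frob_norm_eq_norm_vec)
qed

lemma frob_norm_diff_eq_dist_vec: "frob_norm (\<lambda>i. X i - Y i) = dist (\<chi> i. X i) (\<chi> i. Y i)"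
proof -
  have "(\<chi> i. X i - Y i) = (\<chi> i. X i) - (\<chi> i. Y i)"
    by (simp add: vec_eq_iff)
  then show ?thesis
    by (simp add: frob_norm_eq_norm_vec dist_norm)
qed

lemma frob_norm_diff_pos: "X \<noteq> Y \<Longrightarrow> 0 < frob_norm (\<lambda>i. X i - Y i)"
  by (auto simp: frob_norm_diff_eq_dist_vec vec_eq_iff fun_eq_iff)

lemma frob_norm_diff_eq_sqrt_sum_dist:
  "frob_norm (\<lambda>i. X i - Y i) = sqrt (\<Sum>i\<in>UNIV. (dist (X i) (Y i))\<^sup>2)"
  by (simp add: frob_norm_def dist_norm)

lemma W2_empirical_nearest_matched_frob:
  fixes X Y :: "'n::finite \<Rightarrow> real^'k"
  assumes "nearest_matched X Y"
  shows "W2 (empirical X) (empirical Y) = frob_norm (\<lambda>i. X i - Y i) / sqrt (real CARD('n))"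
  by (simp add: W2_empirical_nearest_matched[OF assms] frob_norm_diff_eq_sqrt_sum_dist real_sqrt_divide)

section \<open>Self-attention on empirical measures\<close>

lemma sum_exp_pos: "(\<Sum>j\<in>(UNIV::'n::finite set). exp (g j :: real)) > 0"
  by (rule sum_pos) auto

lemma self_attn_weights:
  "self_attn A V Z i = (1 / (\<Sum>j\<in>UNIV. exp ((A *v Z i) \<bullet> Z j))) *\<^sub>R
     (\<Sum>j\<in>UNIV. exp ((A *v Z i) \<bullet> Z j) *\<^sub>R (V *v Z j))"
  unfolding self_attn_def attn_P_def
  by (simp add: linear_sum[OF matrix_vector_mul_linear] linear_cmul[OF matrix_vector_mul_linear]
      scaleR_sum_right divide_inverse mult.commute)

lemma Gamma_empirical:
  fixes Z :: "'n::finite \<Rightarrow> real^'d"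
  shows "Gamma A V (empirical Z) x = (1 / (\<Sum>j\<in>UNIV. exp ((A *v x) \<bullet> Z j))) *\<^sub>R
           (\<Sum>j\<in>UNIV. exp ((A *v x) \<bullet> Z j) *\<^sub>R (V *v Z j))"
proof -
  have "(\<integral>y. exp ((A *v x) \<bullet> y) \<partial>empirical Z)
      = (1 / real CARD('n)) *\<^sub>R (\<Sum>j\<in>UNIV. exp ((A *v x) \<bullet> Z j))"
    by (rule integral_empirical) (intro borel_measurable_continuous_onI continuous_intros)
  moreover have "(\<integral>y. exp ((A *v x) \<bullet> y) *\<^sub>R (V *v y) \<partial>empirical Z)
      = (1 / real CARD('n)) *\<^sub>R (\<Sum>j\<in>UNIV. exp ((A *v x) \<bullet> Z j) *\<^sub>R (V *v Z j))"
    by (rule integral_empirical) (intro borel_measurable_continuous_onI continuous_intros)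
  ultimately show ?thesis
    unfolding Gamma_def using sum_exp_pos[of "\<lambda>j. (A *v x) \<bullet> Z j"] by simp
qed

lemma self_attn_eq_Gamma_empirical: "self_attn A V Z i = Gamma A V (empirical Z) (Z i)"
  by (simp add: Gamma_empirical self_attn_weights)

lemma mf_attn_empirical: "mf_attn A V (empirical Z) = empirical (self_attn A V Z)"
proof -
  have "Gamma A V (empirical Z) \<in> borel_measurable borel"
    unfolding Gamma_empirical[abs_def]
    by (intro borel_measurable_continuous_onI continuous_intros)
       (simp add: sum_exp_pos[THEN less_imp_neq, symmetric])
  then have "mf_attn A V (empirical Z) = empirical (\<lambda>i. Gamma A V (empirical Z) (Z i))"
    unfolding mf_attn_def by (rule distr_empirical)
  then show ?thesis
    by (simp flip: self_attn_eq_Gamma_empirical)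
qed

lemma isCont_self_attn_affine:
  fixes A :: "real^'d^'d" and V :: "real^'d^'k" and X H :: "'n::finite \<Rightarrow> real^'d"
  shows "isCont (\<lambda>s. self_attn A V (\<lambda>l. X l + s *\<^sub>R H l) i) t"
  unfolding self_attn_weights
  by (intro continuous_intros bounded_linear.continuous[OF matrix_vector_mul_bounded_linear])
     (simp add: sum_exp_pos[THEN less_imp_neq, symmetric])

lemma lip_const_le:
  assumes "\<And>x y. x \<in> S \<Longrightarrow> y \<in> S \<Longrightarrow> x \<noteq> y \<Longrightarrow> 0 < d1 x y"
    and "\<And>x y. x \<in> S \<Longrightarrow> y \<in> S \<Longrightarrow> d2 (f x) (f y) \<le> L * d1 x y"
  shows "lip_const f d1 d2 S \<le> ereal L"
  unfolding lip_const_def using assms by (auto intro!: SUP_least simp: pos_divide_le_eq)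

lemma lip_const_nonneg:
  assumes "x \<in> S" "y \<in> S" "x \<noteq> y" "d1 x y \<ge> 0" "d2 (f x) (f y) \<ge> 0"
  shows "0 \<le> lip_const f d1 d2 S"
  unfolding lip_const_def
  by (rule SUP_upper2[of "(x, y)"]) (use assms in auto)

lemma return_in_prob_ball:
  fixes x :: "'a::euclidean_space"
  assumes "x \<in> cball 0 R"
  shows "return borel x \<in> prob_ball R"
  using assms by (simp add: prob_ball_def prob_space_return)

lemma lip_const_mf_attn_nonneg:
  fixes A :: "real^'d^'d" and V :: "real^'d^'k"
  assumes "R > 0"
  shows "0 \<le> lip_const (mf_attn A V) W2 W2 (prob_ball R)"
proof -
  obtain y :: "real^'d" where y: "norm y = R"
    using vector_choose_size assms by (metis less_imp_le)
  have "emeasure (return borel (0::real^'d)) {0} \<noteq> emeasure (return borel y) {0}"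
    using y assms by (auto simp: borel_closed split: split_indicator)
  then have "return borel 0 \<noteq> return borel y"
    by metis
  moreover have "return borel 0 \<in> prob_ball R" "return borel y \<in> prob_ball R"
    using y assms by (auto intro: return_in_prob_ball)
  ultimately show ?thesis
    by (intro lip_const_nonneg) (auto simp: W2_def)
qed

lemma self_attn_frob_le_if_nearest_matched:
  fixes A :: "real^'d^'d" and V :: "real^'d^'k" and X Y :: "'n::finite \<Rightarrow> real^'d"
  assumes lip: "lip_const (mf_attn A V) W2 W2 (prob_ball R) = ereal L" and "0 \<le> L"
    and X: "\<And>i. X i \<in> cball 0 R" and Y: "\<And>i. Y i \<in> cball 0 R"
    and match_in: "nearest_matched X Y"
    and match_out: "nearest_matched (self_attn A V X) (self_attn A V Y)"
  shows "frob_norm (\<lambda>i. self_attn A V X i - self_attn A V Y i) \<le> L * frob_norm (\<lambda>i. X i - Y i)"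
proof (cases "X = Y")
  case False
  let ?n = "sqrt (real CARD('n))"
  have n: "?n > 0" by simp
  have "frob_norm (\<lambda>i. X i - Y i) > 0"
    using False by (auto simp: frob_norm_eq_norm_vec vec_eq_iff)
  then have W2_in: "W2 (empirical X) (empirical Y) > 0"
    using n by (simp add: W2_empirical_nearest_matched_frob[OF match_in])
  then have "empirical X \<noteq> empirical Y"
    using W2_empirical_le[of X X] by auto
  then have "ereal (W2 (mf_attn A V (empirical X)) (mf_attn A V (empirical Y)) / W2 (empirical X) (empirical Y))
      \<le> ereal L"
    unfolding lip[symmetric] lip_const_def
    by (intro SUP_upper2[of "(empirical X, empirical Y)"]) (auto intro: empirical_in_prob_ball X Y)
  then have "W2 (empirical (self_attn A V X)) (empirical (self_attn A V Y))
      \<le> L * W2 (empirical X) (empirical Y)"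
    using W2_in by (simp add: mf_attn_empirical pos_divide_le_eq)
  then show ?thesis
    using n by (simp add: W2_empirical_nearest_matched_frob match_in match_out divide_le_eq)
qed (simp add: frob_norm_def)

lemma lipschitz_on_Icc_if_locally:
  fixes f :: "real \<Rightarrow> 'a::metric_space"
  assumes "continuous_on {a..b} f" "M \<ge> 0"
    and local: "\<And>t. t \<in> {a..b} \<Longrightarrow> \<exists>\<delta>>0. M-lipschitz_on ({a..b} \<inter> ball t \<delta>) f"
  shows "M-lipschitz_on {a..b} f"
proof (rule locally_lipschitz_imp_lipschitz[OF assms(1) _ assms(2)])
  fix x y assume x: "x \<in> {a..<b}" and "y > x"
  obtain \<delta> where "\<delta> > 0" and lip: "M-lipschitz_on ({a..b} \<inter> ball x \<delta>) f"
    using local[of x] x by auto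
  define z where "z = min y (min b (x + \<delta> / 2))"
  have z: "z \<in> {x<..y}" "z \<in> {a..b} \<inter> ball x \<delta>"
    using x \<open>y > x\<close> \<open>\<delta> > 0\<close> by (auto simp: z_def dist_real_def)
  then have "dist (f z) (f x) \<le> M * dist z x"
    using x \<open>\<delta> > 0\<close> by (intro lipschitz_onD[OF lip]) auto
  with z show "\<exists>z\<in>{x<..y}. dist (f z) (f x) \<le> M * (z - x)"
    by (auto simp: dist_real_def)
qed

lemma lipschitz_on_Icc_if_locally_off_finite:
  fixes f :: "real \<Rightarrow> 'a::metric_space"
  assumes cont: "continuous_on {a..b} f" and "M \<ge> 0" and "finite E"
    and local: "\<And>t. t \<in> {a..b} - E \<Longrightarrow> \<exists>\<delta>>0. M-lipschitz_on ({a..b} \<inter> ball t \<delta>) f"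
  shows "M-lipschitz_on {a..b} f"
proof (rule locally_lipschitz_imp_lipschitz[OF cont _ \<open>M \<ge> 0\<close>])
  fix x y assume x: "x \<in> {a..<b}" and "y > x"
  \<comment> \<open>No exceptional point lies strictly between \<open>x\<close> and \<open>z\<close>: there the local bounds apply,
    and continuity carries the resulting bound to the endpoints.\<close>
  define z where "z = Min ({y, b} \<union> {e\<in>E. x < e})"
  have fin: "finite ({y, b} \<union> {e\<in>E. x < e})"
    using \<open>finite E\<close> by simp
  have "z \<le> y" "z \<le> b"
    unfolding z_def by (rule Min_le[OF fin]; simp)+
  moreover have "x < z"
    unfolding z_def using fin x \<open>y > x\<close> by (subst Min_gr_iff) auto
  ultimately have z: "x < z" "z \<le> y" "z \<le> b"
    by simp_all
  have E: "E \<inter> {x<..<z} = {}"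
    using fin unfolding z_def by (auto dest: Min_le[OF fin])
  have "M-lipschitz_on {x<..<z} f"
  proof (rule lipschitz_onI[OF _ \<open>M \<ge> 0\<close>])
    fix p q assume pq: "p \<in> {x<..<z}" "q \<in> {x<..<z}"
    have "M-lipschitz_on {min p q..max p q} f"
    proof (rule lipschitz_on_Icc_if_locally[OF _ \<open>M \<ge> 0\<close>])
      show "continuous_on {min p q..max p q} f"
        by (rule continuous_on_subset[OF cont]) (use pq x z in auto)
      fix t assume "t \<in> {min p q..max p q}"
      then have "t \<in> {x<..<z}" using pq by auto
      then have "t \<in> {a..b} - E" using x z E by auto
      then obtain \<delta> where "\<delta> > 0" "M-lipschitz_on ({a..b} \<inter> ball t \<delta>) f" using local by blast
      moreover have "{min p q..max p q} \<inter> ball t \<delta> \<subseteq> {a..b} \<inter> ball t \<delta>"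
        using pq x z by auto
      ultimately show "\<exists>\<delta>>0. M-lipschitz_on ({min p q..max p q} \<inter> ball t \<delta>) f"
        by (blast intro: lipschitz_on_subset)
    qed
    then show "dist (f p) (f q) \<le> M * dist p q"
      by (rule lipschitz_onD) auto
  qed
  moreover have "continuous_on {x..z} f"
    by (rule continuous_on_subset[OF cont]) (use x z in auto)
  ultimately have "M-lipschitz_on {x..z} f"
    using lipschitz_on_closure[of M "{x<..<z}" f] z by simp
  then have "dist (f z) (f x) \<le> M * dist z x"
    using z by (auto intro: lipschitz_onD)
  with z show "\<exists>z\<in>{x<..y}. dist (f z) (f x) \<le> M * (z - x)"
    by (auto simp: dist_real_def)
qed

section \<open>Collisions along a line are finite or permanent\<close>

definition has_entire_extension :: "(real \<Rightarrow> real) \<Rightarrow> bool" where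
  "has_entire_extension r \<longleftrightarrow> (\<exists>g. g holomorphic_on UNIV \<and> (\<forall>t. g (complex_of_real t) = complex_of_real (r t)))"

lemma has_entire_extension_const: "has_entire_extension (\<lambda>t. c)"
  unfolding has_entire_extension_def by (intro exI[of _ "\<lambda>z. complex_of_real c"]) auto

lemma has_entire_extension_ident: "has_entire_extension (\<lambda>t. t)"
  unfolding has_entire_extension_def by (intro exI[of _ "\<lambda>z. z"]) auto

lemma has_entire_extension_add:
  assumes "has_entire_extension r" "has_entire_extension s"
  shows "has_entire_extension (\<lambda>t. r t + s t)"
proof -
  obtain g h where "g holomorphic_on UNIV" "h holomorphic_on UNIV"
    and "\<And>t. g (complex_of_real t) = complex_of_real (r t)" "\<And>t. h (complex_of_real t) = complex_of_real (s t)"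
    using assms unfolding has_entire_extension_def by blast
  then show ?thesis
    unfolding has_entire_extension_def by (intro exI[of _ "\<lambda>z. g z + h z"]) (auto intro: holomorphic_intros)
qed

lemma has_entire_extension_mult:
  assumes "has_entire_extension r" "has_entire_extension s"
  shows "has_entire_extension (\<lambda>t. r t * s t)"
proof -
  obtain g h where "g holomorphic_on UNIV" "h holomorphic_on UNIV"
    and "\<And>t. g (complex_of_real t) = complex_of_real (r t)" "\<And>t. h (complex_of_real t) = complex_of_real (s t)"
    using assms unfolding has_entire_extension_def by blast
  then show ?thesis
    unfolding has_entire_extension_def by (intro exI[of _ "\<lambda>z. g z * h z"]) (auto intro: holomorphic_intros)
qed

lemma has_entire_extension_diff:
  assumes "has_entire_extension r" "has_entire_extension s"
  shows "has_entire_extension (\<lambda>t. r t - s t)"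
proof -
  have "has_entire_extension (\<lambda>t. r t + (- 1) * s t)"
    by (intro has_entire_extension_add has_entire_extension_mult has_entire_extension_const assms)
  then show ?thesis
    by simp
qed

lemma has_entire_extension_exp:
  assumes "has_entire_extension r"
  shows "has_entire_extension (\<lambda>t. exp (r t))"
proof -
  obtain g where "g holomorphic_on UNIV" "\<And>t. g (complex_of_real t) = complex_of_real (r t)"
    using assms unfolding has_entire_extension_def by blast
  then show ?thesis
    unfolding has_entire_extension_def
    by (intro exI[of _ "\<lambda>z. exp (g z)"]) (auto intro: holomorphic_intros simp flip: exp_of_real)
qed

lemma has_entire_extension_sum:
  "finite S \<Longrightarrow> (\<And>m. m \<in> S \<Longrightarrow> has_entire_extension (r m)) \<Longrightarrow> has_entire_extension (\<lambda>t. \<Sum>m\<in>S. r m t)"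
  by (induction S rule: finite_induct) (auto intro: has_entire_extension_const has_entire_extension_add)

lemmas has_entire_extension_intros = has_entire_extension_const has_entire_extension_ident has_entire_extension_add has_entire_extension_diff
  has_entire_extension_mult has_entire_extension_exp has_entire_extension_sum

lemma has_entire_extension_zeros_finite_or_all:
  assumes "has_entire_extension r"
  shows "finite {t\<in>{a..b}. r t = 0} \<or> (\<forall>t. r t = 0)"
proof (cases "finite {t\<in>{a..b}. r t = 0}")
  case inf: False
  obtain g where hol: "g holomorphic_on UNIV" and g: "\<And>t. g (complex_of_real t) = complex_of_real (r t)"
    using assms unfolding has_entire_extension_def by blast
  let ?T = "complex_of_real ` {t\<in>{a..b}. r t = 0}"
  have "compact (complex_of_real ` {a..b})"
    by (intro compact_continuous_image continuous_intros) simp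
  moreover have "infinite ?T"
    using inf by (auto dest!: finite_imageD simp: inj_on_def)
  moreover have "?T \<subseteq> complex_of_real ` {a..b}"
    by auto
  ultimately obtain \<xi> where "\<xi> islimpt ?T"
    unfolding compact_eq_Bolzano_Weierstrass by blast
  then have "g w = 0" for w
    by (rule analytic_continuation[OF hol open_UNIV connected_UNIV subset_UNIV UNIV_I])
       (auto simp: g)
  then show ?thesis
    using g by (metis of_real_eq_0_iff)
qed simp

lemma vec_eq_finite_or_all:
  fixes u v :: "real \<Rightarrow> real^'c"
  assumes "\<And>c. \<exists>r. has_entire_extension r \<and> (\<forall>t. u t $ c = v t $ c \<longleftrightarrow> r t = 0)"
  shows "finite {t\<in>{a..b}. u t = v t} \<or> (\<forall>t. u t = v t)"
proof (cases "\<forall>t. u t = v t")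
  case False
  then obtain c t0 where "u t0 $ c \<noteq> v t0 $ c"
    by (auto simp: vec_eq_iff)
  moreover obtain r where "has_entire_extension r" and r: "\<And>t. u t $ c = v t $ c \<longleftrightarrow> r t = 0"
    using assms by blast
  ultimately have "finite {t\<in>{a..b}. r t = 0}"
    using has_entire_extension_zeros_finite_or_all[of r a b] by auto
  moreover have "{t\<in>{a..b}. u t = v t} \<subseteq> {t\<in>{a..b}. r t = 0}"
    using r by (auto simp: vec_eq_iff)
  ultimately show ?thesis
    using finite_subset by blast
qed simp

lemma has_entire_extension_affine_inner:
  fixes A :: "real^'d^'e"
  shows "has_entire_extension (\<lambda>t. (A *v (x + t *\<^sub>R h)) \<bullet> (y + t *\<^sub>R k))"
  by (simp add: inner_vec_def matrix_vector_mult_def has_entire_extension_intros)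

lemma has_entire_extension_affine_matvec_component:
  fixes V :: "real^'d^'k"
  shows "has_entire_extension (\<lambda>t. (V *v (x + t *\<^sub>R h)) $ c)"
  by (simp add: matrix_vector_mult_def has_entire_extension_intros)

lemma affine_eq_finite_or_all:
  fixes x h y k :: "real^'d"
  shows "finite {t\<in>{a..b}. x + t *\<^sub>R h = y + t *\<^sub>R k} \<or> (\<forall>t. x + t *\<^sub>R h = y + t *\<^sub>R k)"
proof (rule vec_eq_finite_or_all)
  fix c
  have "has_entire_extension (\<lambda>t. (x + t *\<^sub>R h) $ c - (y + t *\<^sub>R k) $ c)"
    by (simp add: has_entire_extension_intros)
  then show "\<exists>r. has_entire_extension r \<and> (\<forall>t. (x + t *\<^sub>R h) $ c = (y + t *\<^sub>R k) $ c \<longleftrightarrow> r t = 0)"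
    by fastforce
qed

lemma self_attn_affine_eq_finite_or_all:
  fixes A :: "real^'d^'d" and V :: "real^'d^'k" and X H :: "'n::finite \<Rightarrow> real^'d"
  defines "Z \<equiv> \<lambda>t l. X l + t *\<^sub>R H l"
  shows "finite {t\<in>{a..b}. self_attn A V (Z t) i = self_attn A V (Z t) j}
     \<or> (\<forall>t. self_attn A V (Z t) i = self_attn A V (Z t) j)"
proof (rule vec_eq_finite_or_all)
  fix c
  \<comment> \<open>Clearing the softmax denominators turns equality of outputs into a zero of an
    exponential polynomial in \<open>t\<close>.\<close>
  define D where "D l t = (\<Sum>m\<in>UNIV. exp ((A *v (X l + t *\<^sub>R H l)) \<bullet> (X m + t *\<^sub>R H m)))" for l t
  define N where "N l t = (\<Sum>m\<in>UNIV. exp ((A *v (X l + t *\<^sub>R H l)) \<bullet> (X m + t *\<^sub>R H m))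
      * (V *v (X m + t *\<^sub>R H m)) $ c)" for l t
  have component: "self_attn A V (Z t) l $ c = N l t / D l t" for l t
    unfolding self_attn_weights N_def D_def Z_def by simp
  have D: "D l t \<noteq> 0" for l t
    unfolding D_def using sum_exp_pos by (rule less_imp_neq[symmetric])
  have "self_attn A V (Z t) i $ c = self_attn A V (Z t) j $ c
      \<longleftrightarrow> N i t * D j t - N j t * D i t = 0" for t
    unfolding component frac_eq_eq[OF D D] by simp
  moreover have "has_entire_extension (\<lambda>t. N i t * D j t - N j t * D i t)"
    unfolding N_def D_def
    by (intro has_entire_extension_intros has_entire_extension_affine_inner has_entire_extension_affine_matvec_component) simp_all
  ultimately show "\<exists>r. has_entire_extension r \<and>
      (\<forall>t. self_attn A V (Z t) i $ c = self_attn A V (Z t) j $ c \<longleftrightarrow> r t = 0)"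
    by blast
qed

lemma finite_transient_collisions:
  fixes \<phi> :: "real \<Rightarrow> 'n::finite \<Rightarrow> 'a"
  assumes "\<And>i j. finite {t\<in>{a..b}. \<phi> t i = \<phi> t j} \<or> (\<forall>t. \<phi> t i = \<phi> t j)"
  shows "finite {t\<in>{a..b}. \<exists>i j. \<phi> t i = \<phi> t j \<and> \<not> (\<forall>s. \<phi> s i = \<phi> s j)}"
proof (rule finite_subset)
  show "{t\<in>{a..b}. \<exists>i j. \<phi> t i = \<phi> t j \<and> \<not> (\<forall>s. \<phi> s i = \<phi> s j)}
      \<subseteq> (\<Union>(i, j)\<in>{(i, j). \<not> (\<forall>s. \<phi> s i = \<phi> s j)}. {t\<in>{a..b}. \<phi> t i = \<phi> t j})"
    by blast
  show "finite (\<Union>(i, j)\<in>{(i, j). \<not> (\<forall>s. \<phi> s i = \<phi> s j)}. {t\<in>{a..b}. \<phi> t i = \<phi> t j})"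
    using assms by auto
qed

lemma eventually_nearest_matched:
  fixes \<phi> :: "'b::metric_space \<Rightarrow> 'n::finite \<Rightarrow> 'a::metric_space"
  assumes cont: "\<And>i. isCont (\<lambda>s. \<phi> s i) t"
    and stable: "\<And>i j. \<phi> t i = \<phi> t j \<Longrightarrow> (\<forall>s. \<phi> s i = \<phi> s j)"
  shows "\<exists>\<delta>>0. \<forall>s\<in>ball t \<delta>. \<forall>u\<in>ball t \<delta>. nearest_matched (\<phi> s) (\<phi> u)"
proof -
  have lim: "((\<lambda>p. \<phi> (f p) i) \<longlongrightarrow> \<phi> t i) (nhds t \<times>\<^sub>F nhds t)"
    if "filterlim f (nhds t) (nhds t \<times>\<^sub>F nhds t)" for f i
    using isCont_tendsto_compose[OF cont that] .
  have "\<forall>\<^sub>F p in nhds t \<times>\<^sub>F nhds t. dist (\<phi> (fst p) i) (\<phi> (snd p) i) \<le> dist (\<phi> (fst p) i) (\<phi> (snd p) j)"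
    for i j
  proof (cases "\<phi> t i = \<phi> t j")
    case True
    then show ?thesis using stable[OF True] by simp
  next
    case False
    have "((\<lambda>p. dist (\<phi> (fst p) i) (\<phi> (snd p) j) - dist (\<phi> (fst p) i) (\<phi> (snd p) i))
        \<longlongrightarrow> dist (\<phi> t i) (\<phi> t j) - dist (\<phi> t i) (\<phi> t i)) (nhds t \<times>\<^sub>F nhds t)"
      using lim[OF filterlim_fst] lim[OF filterlim_snd] by (intro tendsto_diff tendsto_dist)
    moreover have "dist (\<phi> t i) (\<phi> t j) - dist (\<phi> t i) (\<phi> t i) > 0"
      using False by simp
    ultimately show ?thesis
      by (rule order_tendstoD(1)[THEN eventually_mono]) simp
  qed
  then have "\<forall>\<^sub>F p in nhds t \<times>\<^sub>F nhds t. nearest_matched (\<phi> (fst p)) (\<phi> (snd p))"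
    unfolding nearest_matched_def by (intro eventually_all_finite)
  then obtain Q where "\<forall>\<^sub>F s in nhds t. Q s" and Q: "\<And>s u. Q s \<Longrightarrow> Q u \<Longrightarrow> nearest_matched (\<phi> s) (\<phi> u)"
    unfolding eventually_prod_same by auto
  then obtain \<delta> where "\<delta> > 0" "\<And>s. dist s t < \<delta> \<Longrightarrow> Q s"
    unfolding eventually_nhds_metric by auto
  then show ?thesis
    using Q by (metis mem_ball dist_commute)
qed

definition config_segment :: "('n \<Rightarrow> 'a::real_vector) \<Rightarrow> ('n \<Rightarrow> 'a) \<Rightarrow> real \<Rightarrow> 'n \<Rightarrow> 'a" where
  "config_segment X Y t i = X i + t *\<^sub>R (Y i - X i)"

lemma config_segment_0 [simp]: "config_segment X Y 0 = X"
  and config_segment_1 [simp]: "config_segment X Y 1 = Y"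
  by (simp_all add: config_segment_def fun_eq_iff)

lemma config_segment_in_cball:
  fixes X Y :: "'n \<Rightarrow> 'a::real_normed_vector"
  assumes "\<And>i. X i \<in> cball 0 R" "\<And>i. Y i \<in> cball 0 R" "t \<in> {0..1}"
  shows "config_segment X Y t i \<in> cball 0 R"
proof -
  have "config_segment X Y t i = (1 - t) *\<^sub>R X i + t *\<^sub>R Y i"
    by (simp add: config_segment_def algebra_simps)
  then show ?thesis
    using convexD[OF convex_cball assms(1,2)] assms(3) by simp
qed

lemma frob_norm_config_segment_diff:
  "frob_norm (\<lambda>i. config_segment X Y s i - config_segment X Y u i) = frob_norm (\<lambda>i. Y i - X i) * dist s u"
  using frob_norm_scaleR[of "s - u" "\<lambda>i. Y i - X i"]
  by (simp add: config_segment_def dist_real_def algebra_simps)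

lemma self_attn_config_segment_locally_lipschitz:
  fixes A :: "real^'d^'d" and V :: "real^'d^'k" and X Y :: "'n::finite \<Rightarrow> real^'d"
  defines "Z \<equiv> config_segment X Y"
  assumes lip: "lip_const (mf_attn A V) W2 W2 (prob_ball R) = ereal L" and "0 \<le> L"
    and X: "\<And>i. X i \<in> cball 0 R" and Y: "\<And>i. Y i \<in> cball 0 R"
    and stable_in: "\<And>i j. Z t i = Z t j \<Longrightarrow> \<forall>s. Z s i = Z s j"
    and stable_out: "\<And>i j. self_attn A V (Z t) i = self_attn A V (Z t) j
                       \<Longrightarrow> \<forall>s. self_attn A V (Z s) i = self_attn A V (Z s) j"
  shows "\<exists>\<delta>>0. (L * frob_norm (\<lambda>i. Y i - X i))-lipschitz_on ({0..1} \<inter> ball t \<delta>)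
           (\<lambda>s. \<chi> i. self_attn A V (Z s) i)"
proof -
  have cont_in: "isCont (\<lambda>s. Z s i) t" and cont_out: "isCont (\<lambda>s. self_attn A V (Z s) i) t" for i
    unfolding Z_def config_segment_def[abs_def] by (intro continuous_intros isCont_self_attn_affine)+
  obtain \<delta>\<^sub>1 where "\<delta>\<^sub>1 > 0"
    and match_in: "\<And>s u. s \<in> ball t \<delta>\<^sub>1 \<Longrightarrow> u \<in> ball t \<delta>\<^sub>1 \<Longrightarrow> nearest_matched (Z s) (Z u)"
    using eventually_nearest_matched[where \<phi> = Z, OF cont_in stable_in] by blast
  obtain \<delta>\<^sub>2 where "\<delta>\<^sub>2 > 0"
    and match_out: "\<And>s u. s \<in> ball t \<delta>\<^sub>2 \<Longrightarrow> u \<in> ball t \<delta>\<^sub>2 \<Longrightarrow>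
      nearest_matched (self_attn A V (Z s)) (self_attn A V (Z u))"
    using eventually_nearest_matched[where \<phi> = "\<lambda>s. self_attn A V (Z s)", OF cont_out stable_out]
    by blast
  have "dist (\<chi> i. self_attn A V (Z s) i) (\<chi> i. self_attn A V (Z u) i)
      \<le> (L * frob_norm (\<lambda>i. Y i - X i)) * dist s u"
    if "s \<in> {0..1} \<inter> ball t (min \<delta>\<^sub>1 \<delta>\<^sub>2)" "u \<in> {0..1} \<inter> ball t (min \<delta>\<^sub>1 \<delta>\<^sub>2)" for s u
  proof -
    have "dist (\<chi> i. self_attn A V (Z s) i) (\<chi> i. self_attn A V (Z u) i)
        = frob_norm (\<lambda>i. self_attn A V (Z s) i - self_attn A V (Z u) i)"
      by (simp add: frob_norm_diff_eq_dist_vec)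
    also have "\<dots> \<le> L * frob_norm (\<lambda>i. Z s i - Z u i)"
      using that unfolding Z_def
      by (intro self_attn_frob_le_if_nearest_matched[OF lip \<open>0 \<le> L\<close>] config_segment_in_cball
          X Y match_in[unfolded Z_def] match_out[unfolded Z_def]) auto
    finally show ?thesis
      by (simp add: Z_def frob_norm_config_segment_diff mult.assoc)
  qed
  moreover have "0 \<le> L * frob_norm (\<lambda>i. Y i - X i)"
    using \<open>0 \<le> L\<close> by (simp add: frob_norm_nonneg)
  ultimately show ?thesis
    using \<open>\<delta>\<^sub>1 > 0\<close> \<open>\<delta>\<^sub>2 > 0\<close> by (intro exI[of _ "min \<delta>\<^sub>1 \<delta>\<^sub>2"]) (auto intro!: lipschitz_onI)
qed

lemma self_attn_frob_le_if_lip_const_mf_attn: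
  fixes A :: "real^'d^'d" and V :: "real^'d^'k" and X Y :: "'n::finite \<Rightarrow> real^'d"
  assumes lip: "lip_const (mf_attn A V) W2 W2 (prob_ball R) = ereal L" and "0 \<le> L"
    and X: "\<And>i. X i \<in> cball 0 R" and Y: "\<And>i. Y i \<in> cball 0 R"
  shows "frob_norm (\<lambda>i. self_attn A V X i - self_attn A V Y i) \<le> L * frob_norm (\<lambda>i. X i - Y i)"
proof -
  define Z where "Z = config_segment X Y"
  define \<psi> where "\<psi> t = (\<chi> i. self_attn A V (Z t) i)" for t
  define E where "E = {t\<in>{0..1}. \<exists>i j. Z t i = Z t j \<and> \<not> (\<forall>s. Z s i = Z s j)}
    \<union> {t\<in>{0..1}. \<exists>i j. self_attn A V (Z t) i = self_attn A V (Z t) j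
         \<and> \<not> (\<forall>s. self_attn A V (Z s) i = self_attn A V (Z s) j)}"
  have "finite E"
    unfolding E_def Z_def config_segment_def[abs_def]
    by (intro finite_UnI finite_transient_collisions affine_eq_finite_or_all
        self_attn_affine_eq_finite_or_all)
  moreover have "continuous_on {0..1} \<psi>"
    unfolding \<psi>_def Z_def config_segment_def[abs_def]
    by (intro continuous_on_vec_lambda continuous_at_imp_continuous_on ballI isCont_self_attn_affine)
  moreover have "\<exists>\<delta>>0. (L * frob_norm (\<lambda>i. Y i - X i))-lipschitz_on ({0..1} \<inter> ball t \<delta>) \<psi>"
    if t: "t \<in> {0..1} - E" for t
  proof -
    have "\<forall>s. Z s i = Z s j" if "Z t i = Z t j" for i j
      using t that unfolding E_def by blast
    moreover have "\<forall>s. self_attn A V (Z s) i = self_attn A V (Z s) j"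
      if "self_attn A V (Z t) i = self_attn A V (Z t) j" for i j
      using t that unfolding E_def by blast
    ultimately show ?thesis
      unfolding \<psi>_def Z_def by (rule self_attn_config_segment_locally_lipschitz[OF lip \<open>0 \<le> L\<close> X Y])
  qed
  ultimately have "(L * frob_norm (\<lambda>i. Y i - X i))-lipschitz_on {0..1} \<psi>"
    using \<open>0 \<le> L\<close> by (intro lipschitz_on_Icc_if_locally_off_finite) (auto simp: frob_norm_nonneg)
  then have "dist (\<psi> 1) (\<psi> 0) \<le> L * frob_norm (\<lambda>i. Y i - X i)"
    using lipschitz_onD[of _ "{0..1}" \<psi> 1 0] by simp
  then show ?thesis
    by (simp add: \<psi>_def Z_def frob_norm_diff_eq_dist_vec dist_commute)
qed

theorem mainTheorem5:
  fixes R :: real and Q K V :: "real^'d^'k"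
  assumes "R > 0"
  shows "lip_const (self_attn (attn_matrix Q K) V :: ('n::finite \<Rightarrow> real^'d) \<Rightarrow> ('n \<Rightarrow> real^'k))
            (\<lambda>X Y. frob_norm (\<lambda>i. X i - Y i)) (\<lambda>X Y. frob_norm (\<lambda>i. X i - Y i))
            {X. \<forall>i. X i \<in> cball 0 R}
       \<le> lip_const (mf_attn (attn_matrix Q K) V) W2 W2 (prob_ball R)"
proof -
  let ?M = "lip_const (mf_attn (attn_matrix Q K) V) W2 W2 (prob_ball R)"
  have "0 \<le> ?M"
    by (rule lip_const_mf_attn_nonneg[OF assms])
  then consider "?M = \<infinity>" | L where "?M = ereal L" "0 \<le> L"
    by (cases ?M) auto
  then show ?thesis
  proof cases
    case (2 L)
    then show ?thesis
      by (auto intro!: lip_const_le frob_norm_diff_pos self_attn_frob_le_if_lip_const_mf_attn)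
  qed simp
qed

end
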